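(* Let $N\ge1$, $K\ge2$ be integers with $N$ divisible by $K$, put $m=N/K$, and let $\alpha\in[0,1]$. Let $\sigma^A,\sigma^B$ be mixed strategies of $\mathcal{B}_\alpha(N,K)$ such that, for every battlefield $k$, the marginal $\sigma^A_k$ is the uniform distribution on the odd integers $\{1,3,\ldots,2m-1\}$ and the marginal $\sigma^B_k$ is the uniform distribution on the even integers $\{0,2,\ldots,2m\}$. Then $(\sigma^A,\sigma^B)$ is a Nash equilibrium of $\mathcal{B}_\alpha(N,K)$, and each player's expected payoff equals $K/2$.
   Context: Fix integers $N\ge1$, $K\ge2$ and a real number $\alpha$. The Colonel Blotto game $\mathcal{B}_\alpha(N,K)$ is the two-player simultaneous-move game with players $A,B$, each with pure strategy set $S=\{s\in\{0,1,\ldots,N\}^K:\sum_{k=1}^K s_k=N\}$, in which the payoff of player $i$ at the pure profile $(s^i,s^{-i})$ is $\pi^i(s^i,s^{-i})=\sum_{k=1}^K\big(\mathbf 1[s^i_k>s^{-i}_k]+\tfrac{\alpha}{2}\mathbf 1[s^i_k=s^{-i}_k]\big)$. Mixed strategies are probability distributions on $S$, with expected payoffs under independent randomization; a Nash equilibrium is a mixed profile from which no unilateral deviation raises a player's expected payoff. For a mixed strategy $\sigma$ and battlefield $k$, the marginal $\sigma_k$ is the distribution of $s_k$ when $s\sim\sigma$. *)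

theory Defs
  imports "HOL-Probability.Probability"
begin

definition blotto_S :: "nat \<Rightarrow> nat \<Rightarrow> nat list set" where
  "blotto_S N K = {s. length s = K \<and> sum_list s = N}"

definition blotto_payoff :: "real \<Rightarrow> nat \<Rightarrow> nat list \<Rightarrow> nat list \<Rightarrow> real" where
  "blotto_payoff \<alpha> K s t =
     (\<Sum>k<K. (if s ! k > t ! k then 1 else 0) + (\<alpha> / 2) * (if s ! k = t ! k then 1 else 0))"

definition mixed_strategy :: "nat \<Rightarrow> nat \<Rightarrow> nat list pmf \<Rightarrow> bool" where
  "mixed_strategy N K \<sigma> \<longleftrightarrow> set_pmf \<sigma> \<subseteq> blotto_S N K"

definition payoff_A :: "real \<Rightarrow> nat \<Rightarrow> nat list pmf \<Rightarrow> nat list pmf \<Rightarrow> real" where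
  "payoff_A \<alpha> K \<sigma>A \<sigma>B =
     measure_pmf.expectation (pair_pmf \<sigma>A \<sigma>B) (\<lambda>(s, t). blotto_payoff \<alpha> K s t)"

definition payoff_B :: "real \<Rightarrow> nat \<Rightarrow> nat list pmf \<Rightarrow> nat list pmf \<Rightarrow> real" where
  "payoff_B \<alpha> K \<sigma>A \<sigma>B =
     measure_pmf.expectation (pair_pmf \<sigma>A \<sigma>B) (\<lambda>(s, t). blotto_payoff \<alpha> K t s)"

definition nash_equilibrium :: "real \<Rightarrow> nat \<Rightarrow> nat \<Rightarrow> nat list pmf \<Rightarrow> nat list pmf \<Rightarrow> bool" where
  "nash_equilibrium \<alpha> N K \<sigma>A \<sigma>B \<longleftrightarrow>
     mixed_strategy N K \<sigma>A \<and> mixed_strategy N K \<sigma>B \<and>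
     (\<forall>\<tau>. mixed_strategy N K \<tau> \<longrightarrow> payoff_A \<alpha> K \<tau> \<sigma>B \<le> payoff_A \<alpha> K \<sigma>A \<sigma>B) \<and>
     (\<forall>\<tau>. mixed_strategy N K \<tau> \<longrightarrow> payoff_B \<alpha> K \<sigma>A \<tau> \<le> payoff_B \<alpha> K \<sigma>A \<sigma>B)"

definition marginal :: "nat list pmf \<Rightarrow> nat \<Rightarrow> nat pmf" where
  "marginal \<sigma> k = map_pmf (\<lambda>s. s ! k) \<sigma>"

end

theory Submission
  imports Defs
begin

text \<open>Against uniformly distributed even opponent allocations in \<open>{0, 2, \<dots>, 2m}\<close>, putting
  \<open>x\<close> units on a battlefield earns at most \<open>(x + 1) / (2 (m + 1))\<close> in expectation, with
  equality for odd \<open>x < 2m\<close>; against uniform odd allocations in \<open>{1, 3, \<dots>, 2m - 1}\<close> it earns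
  at most \<open>x / (2m)\<close>, with equality for even \<open>x \<le> 2m\<close>. (A tie is worth \<open>\<alpha>/2 \<le> 1/2\<close>, which is
  where \<open>\<alpha> \<le> 1\<close> enters.) These bounds are affine in \<open>x\<close>, and the payoff against a mixed strategy
  depends on it only through its marginals, so summing over the battlefields with
  \<open>\<Sum>\<^sub>k s\<^sub>k = N = K m\<close> bounds every pure allocation's payoff by \<open>K/2\<close>, and every allocation in
  the support of the proposed strategy attains \<open>K/2\<close>.\<close>

definition battle_payoff :: "real \<Rightarrow> nat \<Rightarrow> nat \<Rightarrow> real" where
  "battle_payoff \<alpha> x y = (if x > y then 1 else 0) + \<alpha> / 2 * (if x = y then 1 else 0)"

lemma blotto_payoff_eq_sum_battle_payoff:
  "blotto_payoff \<alpha> K s t = (\<Sum>k<K. battle_payoff \<alpha> (s ! k) (t ! k))"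
  unfolding blotto_payoff_def battle_payoff_def by simp

lemma abs_battle_payoff_le: "\<bar>battle_payoff \<alpha> x y\<bar> \<le> 1 + \<bar>\<alpha>\<bar>"
  unfolding battle_payoff_def by auto

lemma abs_blotto_payoff_le: "\<bar>blotto_payoff \<alpha> K s t\<bar> \<le> real K * (1 + \<bar>\<alpha>\<bar>)"
proof -
  have "\<bar>blotto_payoff \<alpha> K s t\<bar> \<le> (\<Sum>k<K. \<bar>battle_payoff \<alpha> (s ! k) (t ! k)\<bar>)"
    unfolding blotto_payoff_eq_sum_battle_payoff by (rule sum_abs)
  also have "\<dots> \<le> (\<Sum>k<K. 1 + \<bar>\<alpha>\<bar>)"
    by (intro sum_mono abs_battle_payoff_le)
  finally show ?thesis by simp
qed

lemma expectation_pair_pmf: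
  fixes f :: "'a \<times> 'b \<Rightarrow> real"
  assumes "\<And>z. \<bar>f z\<bar> \<le> B"
  shows "measure_pmf.expectation (pair_pmf p q) f
       = measure_pmf.expectation p (\<lambda>x. measure_pmf.expectation q (\<lambda>y. f (x, y)))"
proof -
  have "measure_pmf (pair_pmf p q) = measure_pmf p \<bind> (\<lambda>x. measure_pmf (map_pmf (Pair x) q))"
    by (simp add: pair_pmf_def map_pmf_def measure_pmf_bind)
  also have "integral\<^sup>L \<dots> f
      = measure_pmf.expectation p (\<lambda>x. measure_pmf.expectation (map_pmf (Pair x) q) f)"
    by (rule integral_bind[where K="count_space UNIV" and B=B and B'=1])
       (use assms in \<open>auto simp: measure_pmf_in_subprob_algebra\<close>)
  finally show ?thesis by (simp add: integral_map_pmf)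
qed

lemma payoff_B_eq_payoff_A: "payoff_B \<alpha> K p q = payoff_A \<alpha> K q p"
  unfolding payoff_A_def payoff_B_def
  by (subst pair_commute_pmf) (simp add: integral_map_pmf case_prod_unfold)

lemma expectation_blotto_payoff:
  "measure_pmf.expectation q (blotto_payoff \<alpha> K s)
     = (\<Sum>k<K. measure_pmf.expectation (marginal q k) (battle_payoff \<alpha> (s ! k)))"
proof -
  have "\<And>k. integrable (measure_pmf q) (\<lambda>t. battle_payoff \<alpha> (s ! k) (t ! k))"
    by (rule measure_pmf.integrable_const_bound[where B="1 + \<bar>\<alpha>\<bar>"])
       (simp_all add: abs_battle_payoff_le)
  then show ?thesis
    unfolding blotto_payoff_eq_sum_battle_payoff marginal_def
    by (simp add: integral_map_pmf)
qed

lemma payoff_A_eq_expectation_marginals: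
  "payoff_A \<alpha> K p q = measure_pmf.expectation p
     (\<lambda>s. \<Sum>k<K. measure_pmf.expectation (marginal q k) (battle_payoff \<alpha> (s ! k)))"
proof -
  have "\<bar>(\<lambda>(s, t). blotto_payoff \<alpha> K s t) z\<bar> \<le> real K * (1 + \<bar>\<alpha>\<bar>)" for z
    by (simp add: case_prod_beta abs_blotto_payoff_le)
  then show ?thesis
    unfolding payoff_A_def by (subst expectation_pair_pmf) (simp_all add: expectation_blotto_payoff)
qed

lemma finite_blotto_S: "finite (blotto_S N K)"
proof (rule finite_subset)
  show "blotto_S N K \<subseteq> {xs. set xs \<subseteq> {0..N} \<and> length xs = K}"
    unfolding blotto_S_def using member_le_sum_list by fastforce
qed (rule finite_lists_length_eq, simp)

lemma finite_set_pmf_mixed_strategy: "mixed_strategy N K \<sigma> \<Longrightarrow> finite (set_pmf \<sigma>)"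
  unfolding mixed_strategy_def using finite_blotto_S by (blast intro: finite_subset)

lemma sum_affine_allocation:
  assumes "s \<in> blotto_S N K"
  shows "(\<Sum>k<K. a * real (s ! k) + b) = a * real N + b * real K"
proof -
  have "(\<Sum>k<K. real (s ! k)) = real N"
    using assms unfolding blotto_S_def
    by (auto simp: sum_list_sum_nth atLeast0LessThan simp flip: of_nat_sum)
  then show ?thesis by (simp add: sum.distrib flip: sum_distrib_left)
qed

lemma payoff_A_le_affine:
  assumes "mixed_strategy N K \<tau>"
    and "\<And>k x. k < K \<Longrightarrow> measure_pmf.expectation (marginal q k) (battle_payoff \<alpha> x) \<le> a * real x + b"
  shows "payoff_A \<alpha> K \<tau> q \<le> a * real N + b * real K"
  unfolding payoff_A_eq_expectation_marginals
proof (rule measure_pmf.integral_le_const)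
  show "AE s in measure_pmf \<tau>.
      (\<Sum>k<K. measure_pmf.expectation (marginal q k) (battle_payoff \<alpha> (s ! k))) \<le> a * real N + b * real K"
  proof (rule AE_pmfI)
    fix s assume "s \<in> set_pmf \<tau>"
    then have "s \<in> blotto_S N K" using assms(1) unfolding mixed_strategy_def by blast
    have "(\<Sum>k<K. measure_pmf.expectation (marginal q k) (battle_payoff \<alpha> (s ! k)))
        \<le> (\<Sum>k<K. a * real (s ! k) + b)"
      by (intro sum_mono assms(2)) simp
    also have "\<dots> = a * real N + b * real K"
      using \<open>s \<in> blotto_S N K\<close> by (rule sum_affine_allocation)
    finally show "(\<Sum>k<K. measure_pmf.expectation (marginal q k) (battle_payoff \<alpha> (s ! k)))
        \<le> a * real N + b * real K" .
  qed
qed (rule integrable_measure_pmf_finite[OF finite_set_pmf_mixed_strategy[OF assms(1)]])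

lemma payoff_A_eq_affine:
  assumes "mixed_strategy N K p"
    and "\<And>s k. s \<in> set_pmf p \<Longrightarrow> k < K \<Longrightarrow>
           measure_pmf.expectation (marginal q k) (battle_payoff \<alpha> (s ! k)) = a * real (s ! k) + b"
  shows "payoff_A \<alpha> K p q = a * real N + b * real K"
proof -
  have "(\<Sum>k<K. measure_pmf.expectation (marginal q k) (battle_payoff \<alpha> (s ! k)))
      = a * real N + b * real K" if "s \<in> set_pmf p" for s
  proof -
    have "s \<in> blotto_S N K" using assms(1) that unfolding mixed_strategy_def by blast
    moreover have "(\<Sum>k<K. measure_pmf.expectation (marginal q k) (battle_payoff \<alpha> (s ! k)))
        = (\<Sum>k<K. a * real (s ! k) + b)"
      using that by (intro sum.cong refl assms(2)) simp_all
    ultimately show ?thesis by (simp add: sum_affine_allocation)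
  qed
  then show ?thesis
    unfolding payoff_A_eq_expectation_marginals
    by (subst integral_cong_AE[where g="\<lambda>_. a * real N + b * real K"]) (auto simp: AE_measure_pmf_iff)
qed

lemma expectation_battle_payoff_pmf_of_set:
  assumes "finite A" and "A \<noteq> {}"
  shows "measure_pmf.expectation (pmf_of_set A) (battle_payoff \<alpha> x)
       = (real (card {y\<in>A. y < x}) + (if x \<in> A then \<alpha> / 2 else 0)) / real (card A)"
proof -
  have "(\<Sum>y\<in>A. battle_payoff \<alpha> x y)
      = (\<Sum>y\<in>A. if y < x then 1 else 0) + \<alpha> / 2 * (\<Sum>y\<in>A. if y = x then 1 else 0)"
    unfolding battle_payoff_def sum.distrib sum_distrib_left by (simp add: eq_commute)
  also have "\<dots> = real (card {y\<in>A. y < x}) + (if x \<in> A then \<alpha> / 2 else 0)"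
    using assms(1) by (simp add: sum.inter_filter[symmetric])
  finally show ?thesis
    using assms by (simp add: integral_pmf_of_set)
qed

lemma card_even_less: "card {y::nat. even y \<and> y < x} = (x + 1) div 2"
proof (induction x)
  case (Suc x)
  have "{y. even y \<and> y < Suc x} = (if even x then insert x else id) {y. even y \<and> y < x}"
    by (auto simp: less_Suc_eq)
  then show ?case using Suc by auto
qed simp

lemma card_odd_less: "card {y::nat. odd y \<and> y < x} = x div 2"
proof (induction x)
  case (Suc x)
  have "{y. odd y \<and> y < Suc x} = (if odd x then insert x else id) {y. odd y \<and> y < x}"
    by (auto simp: less_Suc_eq)
  then show ?case using Suc by auto
qed simp

lemma expectation_battle_payoff_uniform_even:
  assumes "\<alpha> \<le> 1"
  shows "measure_pmf.expectation (pmf_of_set {j. even j \<and> j \<le> 2 * m}) (battle_payoff \<alpha> x)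
           \<le> (real x + 1) / (2 * (real m + 1))"
    and "odd x \<Longrightarrow> x < 2 * m \<Longrightarrow>
         measure_pmf.expectation (pmf_of_set {j. even j \<and> j \<le> 2 * m}) (battle_payoff \<alpha> x)
           = (real x + 1) / (2 * (real m + 1))"
proof -
  let ?E = "{j. even j \<and> j \<le> 2 * m}"
  have "?E = {j. even j \<and> j < 2 * m + 1}" by auto
  then have card_E: "card ?E = m + 1" by (simp add: card_even_less)
  have expectation: "measure_pmf.expectation (pmf_of_set ?E) (battle_payoff \<alpha> x)
      = (real (card {y\<in>?E. y < x}) + (if x \<in> ?E then \<alpha> / 2 else 0)) / (real m + 1)"
    by (subst expectation_battle_payoff_pmf_of_set) (auto simp: card_E)
  have less_x: "card {y\<in>?E. y < x} \<le> (x + 1) div 2"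
    unfolding card_even_less[symmetric] by (rule card_mono) auto
  have "real (card {y\<in>?E. y < x}) + (if x \<in> ?E then \<alpha> / 2 else 0) \<le> (real x + 1) / 2"
    (is "?wins \<le> _")
  proof (cases "even x")
    case True
    then have "real ((x + 1) div 2) = real x / 2" by (auto elim!: evenE)
    then show ?thesis using less_x assms by simp
  next
    case False
    then have "real ((x + 1) div 2) = (real x + 1) / 2" by (auto elim!: oddE)
    then show ?thesis using less_x False by simp
  qed
  then have "?wins / (real m + 1) \<le> (real x + 1) / 2 / (real m + 1)"
    by (rule divide_right_mono) simp
  then show "measure_pmf.expectation (pmf_of_set ?E) (battle_payoff \<alpha> x)
      \<le> (real x + 1) / (2 * (real m + 1))"
    unfolding expectation by (simp only: divide_divide_eq_left)
  assume "odd x" "x < 2 * m"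
  then have "{y\<in>?E. y < x} = {y. even y \<and> y < x}" by auto
  moreover have "real ((x + 1) div 2) = (real x + 1) / 2" using \<open>odd x\<close> by (auto elim!: oddE)
  ultimately have "?wins = (real x + 1) / 2"
    using \<open>odd x\<close> by (simp add: card_even_less)
  then show "measure_pmf.expectation (pmf_of_set ?E) (battle_payoff \<alpha> x)
      = (real x + 1) / (2 * (real m + 1))"
    unfolding expectation by (simp only: divide_divide_eq_left)
qed

lemma expectation_battle_payoff_uniform_odd:
  assumes "\<alpha> \<le> 1" and "0 < m"
  shows "measure_pmf.expectation (pmf_of_set {j. odd j \<and> j < 2 * m}) (battle_payoff \<alpha> x)
           \<le> real x / (2 * real m)"
    and "even x \<Longrightarrow> x \<le> 2 * m \<Longrightarrow>
         measure_pmf.expectation (pmf_of_set {j. odd j \<and> j < 2 * m}) (battle_payoff \<alpha> x)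
           = real x / (2 * real m)"
proof -
  let ?O = "{j. odd j \<and> j < 2 * m}"
  have card_O: "card ?O = m" by (simp add: card_odd_less)
  have expectation: "measure_pmf.expectation (pmf_of_set ?O) (battle_payoff \<alpha> x)
      = (real (card {y\<in>?O. y < x}) + (if x \<in> ?O then \<alpha> / 2 else 0)) / real m"
    using assms(2) card_O
    by (subst expectation_battle_payoff_pmf_of_set) (auto intro!: exI[of _ 1])
  have less_x: "card {y\<in>?O. y < x} \<le> x div 2"
    unfolding card_odd_less[symmetric] by (rule card_mono) auto
  have "real (card {y\<in>?O. y < x}) + (if x \<in> ?O then \<alpha> / 2 else 0) \<le> real x / 2"
    (is "?wins \<le> _")
  proof (cases "even x")
    case True
    then have "real (x div 2) = real x / 2" by (auto elim!: evenE)
    then show ?thesis using less_x True by simp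
  next
    case False
    then have "real (x div 2) = (real x - 1) / 2" by (auto elim!: oddE)
    then show ?thesis using less_x assms(1) by simp
  qed
  then have "?wins / real m \<le> real x / 2 / real m"
    by (rule divide_right_mono) simp
  then show "measure_pmf.expectation (pmf_of_set ?O) (battle_payoff \<alpha> x) \<le> real x / (2 * real m)"
    unfolding expectation by (simp only: divide_divide_eq_left)
  assume "even x" "x \<le> 2 * m"
  then have "{y\<in>?O. y < x} = {y. odd y \<and> y < x}" by auto
  moreover have "real (x div 2) = real x / 2" using \<open>even x\<close> by (auto elim!: evenE)
  ultimately have "?wins = real x / 2"
    using \<open>even x\<close> by (simp add: card_odd_less)
  then show "measure_pmf.expectation (pmf_of_set ?O) (battle_payoff \<alpha> x) = real x / (2 * real m)"
    unfolding expectation by (simp only: divide_divide_eq_left)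
qed

lemma payoff_A_against_uniform_even:
  assumes "\<alpha> \<le> 1" and "N = K * m" and "mixed_strategy N K \<tau>"
    and "\<And>k. k < K \<Longrightarrow> marginal q k = pmf_of_set {j. even j \<and> j \<le> 2 * m}"
  shows "payoff_A \<alpha> K \<tau> q \<le> real K / 2"
    and "(\<And>s k. s \<in> set_pmf \<tau> \<Longrightarrow> k < K \<Longrightarrow> odd (s ! k) \<and> s ! k < 2 * m) \<Longrightarrow>
         payoff_A \<alpha> K \<tau> q = real K / 2"
proof -
  define a where "a = 1 / (2 * (real m + 1))"
  have "a * real N + a * real K = a * (2 * (real m + 1)) * (real K / 2)"
    unfolding assms(2) by (simp add: algebra_simps)
  then have affine_value: "a * real N + a * real K = real K / 2"
    unfolding a_def by simp
  have "measure_pmf.expectation (marginal q k) (battle_payoff \<alpha> x) \<le> a * real x + a"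
    if "k < K" for k x
    using expectation_battle_payoff_uniform_even(1)[OF assms(1)] assms(4)[OF that]
    by (simp add: a_def add_divide_distrib)
  then show "payoff_A \<alpha> K \<tau> q \<le> real K / 2"
    unfolding affine_value[symmetric] by (rule payoff_A_le_affine[OF assms(3)])
  assume "\<And>s k. s \<in> set_pmf \<tau> \<Longrightarrow> k < K \<Longrightarrow> odd (s ! k) \<and> s ! k < 2 * m"
  then have "measure_pmf.expectation (marginal q k) (battle_payoff \<alpha> (s ! k)) = a * real (s ! k) + a"
    if "s \<in> set_pmf \<tau>" "k < K" for s k
    using expectation_battle_payoff_uniform_even(2)[OF assms(1)] assms(4) that
    by (simp add: a_def add_divide_distrib)
  then show "payoff_A \<alpha> K \<tau> q = real K / 2"
    unfolding affine_value[symmetric] by (rule payoff_A_eq_affine[OF assms(3)])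
qed

lemma payoff_A_against_uniform_odd:
  assumes "\<alpha> \<le> 1" and "N = K * m" and "0 < m" and "mixed_strategy N K \<tau>"
    and "\<And>k. k < K \<Longrightarrow> marginal q k = pmf_of_set {j. odd j \<and> j < 2 * m}"
  shows "payoff_A \<alpha> K \<tau> q \<le> real K / 2"
    and "(\<And>s k. s \<in> set_pmf \<tau> \<Longrightarrow> k < K \<Longrightarrow> even (s ! k) \<and> s ! k \<le> 2 * m) \<Longrightarrow>
         payoff_A \<alpha> K \<tau> q = real K / 2"
proof -
  define b where "b = 1 / (2 * real m)"
  have affine_value: "b * real N + 0 * real K = real K / 2"
    unfolding b_def assms(2) using assms(3) by simp
  have "measure_pmf.expectation (marginal q k) (battle_payoff \<alpha> x) \<le> b * real x + 0"
    if "k < K" for k x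
    using expectation_battle_payoff_uniform_odd(1)[OF assms(1,3)] assms(5)[OF that]
    by (simp add: b_def)
  then show "payoff_A \<alpha> K \<tau> q \<le> real K / 2"
    unfolding affine_value[symmetric] by (rule payoff_A_le_affine[OF assms(4)])
  assume "\<And>s k. s \<in> set_pmf \<tau> \<Longrightarrow> k < K \<Longrightarrow> even (s ! k) \<and> s ! k \<le> 2 * m"
  then have "measure_pmf.expectation (marginal q k) (battle_payoff \<alpha> (s ! k)) = b * real (s ! k) + 0"
    if "s \<in> set_pmf \<tau>" "k < K" for s k
    using expectation_battle_payoff_uniform_odd(2)[OF assms(1,3)] assms(5) that
    by (simp add: b_def)
  then show "payoff_A \<alpha> K \<tau> q = real K / 2"
    unfolding affine_value[symmetric] by (rule payoff_A_eq_affine[OF assms(4)])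
qed

lemma nth_mem_if_marginal_eq_pmf_of_set:
  assumes "marginal \<sigma> k = pmf_of_set A" and "finite A" and "A \<noteq> {}" and "s \<in> set_pmf \<sigma>"
  shows "s ! k \<in> A"
proof -
  have "s ! k \<in> set_pmf (marginal \<sigma> k)" using assms(4) unfolding marginal_def by simp
  then show ?thesis using assms(1-3) by simp
qed

theorem mainTheorem12:
  fixes N K m :: nat and \<alpha> :: real and \<sigma>A \<sigma>B :: "nat list pmf"
  assumes "N \<ge> 1" and "K \<ge> 2" and "K dvd N" and "m = N div K"
    and "0 \<le> \<alpha>" and "\<alpha> \<le> 1"
    and "mixed_strategy N K \<sigma>A" and "mixed_strategy N K \<sigma>B"
    and "\<And>k. k < K \<Longrightarrow> marginal \<sigma>A k = pmf_of_set {j. odd j \<and> j < 2 * m}"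
    and "\<And>k. k < K \<Longrightarrow> marginal \<sigma>B k = pmf_of_set {j. even j \<and> j \<le> 2 * m}"
  shows "nash_equilibrium \<alpha> N K \<sigma>A \<sigma>B
         \<and> payoff_A \<alpha> K \<sigma>A \<sigma>B = real K / 2
         \<and> payoff_B \<alpha> K \<sigma>A \<sigma>B = real K / 2"
proof -
  have N: "N = K * m" using assms(3,4) by simp
  then have "0 < m" using assms(1) by (cases m) auto
  have "{j. odd j \<and> j < 2 * m} \<noteq> {}" using \<open>0 < m\<close> by (auto intro!: exI[of _ 1])
  then have "odd (s ! k) \<and> s ! k < 2 * m" if "s \<in> set_pmf \<sigma>A" "k < K" for s k
    using nth_mem_if_marginal_eq_pmf_of_set[OF assms(9)[OF that(2)] _ _ that(1)] by simp
  then have value_A: "payoff_A \<alpha> K \<sigma>A \<sigma>B = real K / 2"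
    using payoff_A_against_uniform_even(2)[OF assms(6) N assms(7) assms(10)] by blast
  have "{j. even j \<and> j \<le> 2 * m} \<noteq> {}" by (auto intro!: exI[of _ 0])
  then have "even (t ! k) \<and> t ! k \<le> 2 * m" if "t \<in> set_pmf \<sigma>B" "k < K" for t k
    using nth_mem_if_marginal_eq_pmf_of_set[OF assms(10)[OF that(2)] _ _ that(1)] by simp
  then have value_B: "payoff_B \<alpha> K \<sigma>A \<sigma>B = real K / 2"
    unfolding payoff_B_eq_payoff_A
    using payoff_A_against_uniform_odd(2)[OF assms(6) N \<open>0 < m\<close> assms(8) assms(9)] by blast
  have "payoff_A \<alpha> K \<tau> \<sigma>B \<le> real K / 2" "payoff_B \<alpha> K \<sigma>A \<tau> \<le> real K / 2"
    if "mixed_strategy N K \<tau>" for \<tau>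
    unfolding payoff_B_eq_payoff_A
    using payoff_A_against_uniform_even(1)[OF assms(6) N that assms(10)]
      payoff_A_against_uniform_odd(1)[OF assms(6) N \<open>0 < m\<close> that assms(9)] by auto
  then show ?thesis
    unfolding nash_equilibrium_def value_A value_B using assms(7,8) by blast
qed

end
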